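(* Let $G$ be an additive group and let $X$ and $\preceq$ be as described below. Then $(X,\preceq)$ is an upper-semilinear $\vee$-semilattice.
   Context: A function $f$ defined on an interval $(\alpha,\beta)$ is piecewise constant from the left if for every $x\in(\alpha,\beta)$ there is $\varepsilon>0$ with $f$ constant on $[x-\varepsilon,x]$. $X$ is the set of pairs $(f,a_f)$ where $a_f>0$ is a real number and $f:(a_f,+\infty)\to G$ is piecewise constant from the left with $f|_{(b_f,+\infty)}\equiv 0$ for some $b_f\ge a_f$. The partial order is: $(f,a_f)\preceq(g,a_g)$ iff $a_f\le a_g$ and $f|_{(a_g,+\infty)}=g$. A $\vee$-semilattice is a poset in which any two elements have a supremum; it is upper-semilinear if every upper cone $\{y: x\preceq y\}$ is linearly ordered. *)

theory Defs
  imports Complex_Main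
begin

text \<open>A function on (a,+inf) is represented by a total function real => G which is
  normalised to 0 on (-inf, a], so that equality of pairs is equality of the
  partial functions.\<close>

definition pc_left :: "real \<Rightarrow> (real \<Rightarrow> 'g) \<Rightarrow> bool" where
  "pc_left a f \<longleftrightarrow> (\<forall>x>a. \<exists>\<epsilon>>0. x - \<epsilon> > a \<and> (\<forall>y\<in>{x - \<epsilon>..x}. f y = f x))"

definition Xset :: "((real \<Rightarrow> 'g::group_add) \<times> real) set" where
  "Xset = {(f, a). a > 0 \<and> (\<forall>x\<le>a. f x = 0) \<and> pc_left a f \<and>
                   (\<exists>b\<ge>a. \<forall>x>b. f x = 0)}"

definition Xle :: "((real \<Rightarrow> 'g) \<times> real) \<Rightarrow> ((real \<Rightarrow> 'g) \<times> real) \<Rightarrow> bool" where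
  "Xle p q \<longleftrightarrow> snd p \<le> snd q \<and> (\<forall>x>snd q. fst p x = fst q x)"

definition is_sup_on :: "'a set \<Rightarrow> ('a \<Rightarrow> 'a \<Rightarrow> bool) \<Rightarrow> 'a \<Rightarrow> 'a \<Rightarrow> 'a \<Rightarrow> bool" where
  "is_sup_on A le x y s \<longleftrightarrow> s \<in> A \<and> le x s \<and> le y s \<and>
     (\<forall>z\<in>A. le x z \<and> le y z \<longrightarrow> le s z)"

definition poset_on :: "'a set \<Rightarrow> ('a \<Rightarrow> 'a \<Rightarrow> bool) \<Rightarrow> bool" where
  "poset_on A le \<longleftrightarrow> (\<forall>x\<in>A. le x x) \<and>
     (\<forall>x\<in>A. \<forall>y\<in>A. le x y \<and> le y x \<longrightarrow> x = y) \<and>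
     (\<forall>x\<in>A. \<forall>y\<in>A. \<forall>z\<in>A. le x y \<and> le y z \<longrightarrow> le x z)"

definition join_semilattice_on :: "'a set \<Rightarrow> ('a \<Rightarrow> 'a \<Rightarrow> bool) \<Rightarrow> bool" where
  "join_semilattice_on A le \<longleftrightarrow> poset_on A le \<and>
     (\<forall>x\<in>A. \<forall>y\<in>A. \<exists>s. is_sup_on A le x y s)"

definition upper_semilinear_on :: "'a set \<Rightarrow> ('a \<Rightarrow> 'a \<Rightarrow> bool) \<Rightarrow> bool" where
  "upper_semilinear_on A le \<longleftrightarrow>
     (\<forall>x\<in>A. \<forall>y\<in>A. \<forall>z\<in>A. le x y \<and> le x z \<longrightarrow> le y z \<or> le z y)"

end

theory Submission
  imports Defs
begin

text \<open>Two elements (f, a), (g, b) of X have the common upper bounds (k, d) with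
  d \<ge> max a b such that f and g agree on (d, +inf). The set of such d is an up-closed
  half-line that contains its infimum c, so f cut down to (c, +inf) is the least upper
  bound. Upper semilinearity holds because all upper bounds of one element are
  restrictions of the same function.\<close>

lemma Xle_refl: "Xle p p"
  by (simp add: Xle_def)

lemma Xle_trans: "Xle p q \<Longrightarrow> Xle q r \<Longrightarrow> Xle p r"
  by (fastforce simp: Xle_def)

lemma Xle_antisym:
  assumes "Xle p q" "Xle q p" "p \<in> Xset" "q \<in> Xset"
  shows "p = q"
proof -
  obtain f a g b where p: "p = (f, a)" and q: "q = (g, b)" by fastforce
  have "a = b" using assms(1,2) by (simp add: Xle_def p q)
  moreover have "f x = g x" for x
    using assms \<open>a = b\<close> by (cases "x > b") (auto simp: Xle_def Xset_def p q)
  ultimately show ?thesis by (simp add: p q ext)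
qed

lemma poset_on_Xset: "poset_on Xset Xle"
  unfolding poset_on_def using Xle_refl Xle_trans Xle_antisym by blast

lemma Xle_upper_cone_linear: "Xle p q \<Longrightarrow> Xle p r \<Longrightarrow> Xle q r \<or> Xle r q"
  by (cases "snd q \<le> snd r") (auto simp: Xle_def)

lemma upper_semilinear_on_Xset: "upper_semilinear_on Xset Xle"
  unfolding upper_semilinear_on_def using Xle_upper_cone_linear by blast

lemma least_agreement_threshold:
  fixes f g :: "real \<Rightarrow> 'b"
  assumes "t\<^sub>0 \<ge> m" "\<forall>x>t\<^sub>0. f x = g x"
  obtains c where "c \<ge> m" "\<forall>x>c. f x = g x"
    "\<And>t. t \<ge> m \<Longrightarrow> \<forall>x>t. f x = g x \<Longrightarrow> c \<le> t"
proof
  define S where "S = {t. t \<ge> m \<and> (\<forall>x>t. f x = g x)}"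
  have "t\<^sub>0 \<in> S" and bdd: "bdd_below S"
    using assms by (auto simp: S_def bdd_below_def)
  then show "Inf S \<ge> m"
    by (intro cInf_greatest) (auto simp: S_def)
  show "\<forall>x>Inf S. f x = g x"
  proof (intro allI impI)
    fix x assume "x > Inf S"
    then obtain t where "t \<in> S" "t < x"
      using \<open>t\<^sub>0 \<in> S\<close> by (metis cInf_lessD empty_iff)
    then show "f x = g x" by (simp add: S_def)
  qed
  show "Inf S \<le> t" if "t \<ge> m" "\<forall>x>t. f x = g x" for t
    using that bdd by (intro cInf_lower) (auto simp: S_def)
qed

definition cut_below :: "real \<Rightarrow> (real \<Rightarrow> 'g::zero) \<Rightarrow> real \<Rightarrow> 'g" where
  "cut_below c f x = (if x > c then f x else 0)"

lemma pc_left_cut_below: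
  assumes "pc_left a f" "a \<le> c"
  shows "pc_left c (cut_below c f)"
  unfolding pc_left_def
proof (intro allI impI)
  fix x assume "x > c"
  then have "x > a" using assms(2) by simp
  then obtain \<epsilon> where "\<epsilon> > 0" and const: "\<forall>y\<in>{x - \<epsilon>..x}. f y = f x"
    using assms(1) unfolding pc_left_def by blast
  define \<delta> where "\<delta> = min \<epsilon> ((x - c) / 2)"
  have "\<delta> > 0" "\<delta> \<le> \<epsilon>"
    using \<open>\<epsilon> > 0\<close> \<open>x > c\<close> by (simp_all add: \<delta>_def)
  have "x - \<delta> > c"
    using \<open>x > c\<close> by (simp add: \<delta>_def min_def field_simps)
  have "\<forall>y\<in>{x - \<delta>..x}. cut_below c f y = cut_below c f x"
  proof
    fix y assume "y \<in> {x - \<delta>..x}"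
    then have "y > c" "y \<in> {x - \<epsilon>..x}"
      using \<open>x - \<delta> > c\<close> \<open>\<delta> \<le> \<epsilon>\<close> by auto
    moreover from this(2) have "f y = f x"
      using const by blast
    ultimately show "cut_below c f y = cut_below c f x"
      using \<open>x > c\<close> by (simp add: cut_below_def)
  qed
  then show "\<exists>\<delta>>0. x - \<delta> > c \<and> (\<forall>y\<in>{x - \<delta>..x}. cut_below c f y = cut_below c f x)"
    using \<open>\<delta> > 0\<close> \<open>x - \<delta> > c\<close> by blast
qed

lemma cut_below_in_Xset:
  assumes "(f, a) \<in> Xset" "a \<le> c"
  shows "(cut_below c f, c) \<in> Xset"
proof -
  from assms(1) obtain b where "a > 0" "pc_left a f" "\<forall>x>b. f x = 0"
    by (auto simp: Xset_def)
  then have "c > 0" "pc_left c (cut_below c f)" "\<forall>x>max b c. cut_below c f x = 0"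
    using assms(2) pc_left_cut_below by (simp_all add: cut_below_def)
  then show ?thesis
    unfolding Xset_def by (auto simp: cut_below_def intro!: exI[of _ "max b c"])
qed

lemma Xle_cut_below: "a \<le> c \<Longrightarrow> Xle (f, a) (cut_below c f, c)"
  by (simp add: Xle_def cut_below_def)

lemma cut_below_Xle:
  assumes "Xle (f, a) (k, d)" "c \<le> d"
  shows "Xle (cut_below c f, c) (k, d)"
  using assms by (simp add: Xle_def cut_below_def)

lemma sup_exists_Xset:
  assumes "p \<in> Xset" "q \<in> Xset"
  shows "\<exists>s. is_sup_on Xset Xle p q s"
proof -
  obtain f a g b where p: "p = (f, a)" and q: "q = (g, b)" by fastforce
  obtain b\<^sub>f b\<^sub>g where "\<forall>x>b\<^sub>f. f x = 0" "\<forall>x>b\<^sub>g. g x = 0" "b\<^sub>f \<ge> a" "b\<^sub>g \<ge> b"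
    using assms by (auto simp: Xset_def p q)
  then have "max b\<^sub>f b\<^sub>g \<ge> max a b" "\<forall>x>max b\<^sub>f b\<^sub>g. f x = g x"
    by auto
  then obtain c where c: "c \<ge> max a b" "\<forall>x>c. f x = g x"
    and least: "\<And>t. t \<ge> max a b \<Longrightarrow> \<forall>x>t. f x = g x \<Longrightarrow> c \<le> t"
    by (rule least_agreement_threshold) blast
  have "is_sup_on Xset Xle p q (cut_below c f, c)"
    unfolding is_sup_on_def
  proof (intro conjI ballI impI)
    show "(cut_below c f, c) \<in> Xset"
      using assms(1) c(1) unfolding p by (intro cut_below_in_Xset) auto
    show "Xle p (cut_below c f, c)"
      using c(1) unfolding p by (intro Xle_cut_below) simp
    show "Xle q (cut_below c f, c)"
      using c unfolding q by (simp add: Xle_def cut_below_def)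
    fix z assume "Xle p z \<and> Xle q z"
    moreover obtain k d where z: "z = (k, d)" by fastforce
    ultimately have "Xle (f, a) (k, d)" "\<forall>x>d. f x = g x" "max a b \<le> d"
      by (simp_all add: Xle_def p q)
    then show "Xle (cut_below c f, c) z"
      unfolding z by (intro cut_below_Xle least)
  qed
  then show ?thesis by blast
qed

theorem lemma4:
  shows "join_semilattice_on (Xset :: ((real \<Rightarrow> 'g::group_add) \<times> real) set) Xle \<and>
         upper_semilinear_on (Xset :: ((real \<Rightarrow> 'g::group_add) \<times> real) set) Xle"
  unfolding join_semilattice_on_def
  using poset_on_Xset upper_semilinear_on_Xset sup_exists_Xset by blast

end
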